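(* Let $(C,F)$ be an antler in an undirected multigraph $G$, and let $G':=G-(C\cup F)$ and $S:=C$. Then (i) for every minimum feedback vertex set $S'$ of $G'$, the set $S\cup S'$ is a minimum feedback vertex set of $G$; and (ii) for every integer $z\ge0$ and every $z$-antler $(\hat C,\hat F)$ in $G$, there exists a $z$-antler $(C',F')$ in $G'$ with $C'\cup F'=(\hat C\cup\hat F)\cap V(G')$ and $|C'|=|\hat C|-|(\hat C\cup\hat F)\cap S|$.
   Context: A feedback vertex set (FVS) of $G$ is a set $X\subseteq V(G)$ with $G-X$ acyclic (self-loops and pairs of parallel edges count as cycles); $\mathrm{fvs}(G)$ is its minimum size. For disjoint $X,Y$, $e(X,Y)$ is the number of edges between $X$ and $Y$. A feedback vertex cut (FVC) in $G$ is a pair of disjoint sets $C,F\subseteq V(G)$ such that $G[F]$ is a forest and every tree $T$ of $G[F]$ satisfies $e(V(T),V(G)\setminus(C\cup F))\le1$. An antler is a FVC $(C,F)$ with $|C|\le\mathrm{fvs}(G[C\cup F])$. For $C\subseteq V(G)$, a $C$-certificate is a subgraph $H$ of $G$ such that $C$ is a minimum FVS of $H$; it has order $z$ if every component $H'$ of $H$ satisfies $\mathrm{fvs}(H')=|C\cap V(H')|\le z$. A $z$-antler is an antler $(C,F)$ such that $G[C\cup F]$ contains a $C$-certificate of order $z$. *)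

theory Defs
  imports Main "HOL-Library.Multiset" "HOL-Library.Uprod"
begin

text \<open>A finite undirected multigraph: a vertex set together with a multiset of
unordered pairs of vertices (Upair v v is a self-loop; multiplicity > 1 means
parallel edges).\<close>

type_synonym 'a mgraph = "'a set \<times> 'a uprod multiset"

definition verts :: "'a mgraph \<Rightarrow> 'a set" where "verts G = fst G"
definition edges :: "'a mgraph \<Rightarrow> 'a uprod multiset" where "edges G = snd G"

definition mgraph :: "'a mgraph \<Rightarrow> bool" where
  "mgraph G \<longleftrightarrow> finite (verts G) \<and> (\<forall>e\<in>#edges G. set_uprod e \<subseteq> verts G)"

definition subgraph :: "'a mgraph \<Rightarrow> 'a mgraph \<Rightarrow> bool" where
  "subgraph H G \<longleftrightarrow> mgraph H \<and> verts H \<subseteq> verts G \<and> edges H \<subseteq># edges G"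

definition induced :: "'a mgraph \<Rightarrow> 'a set \<Rightarrow> 'a mgraph" where
  "induced G X = (verts G \<inter> X, filter_mset (\<lambda>e. set_uprod e \<subseteq> X) (edges G))"

definition del_verts :: "'a mgraph \<Rightarrow> 'a set \<Rightarrow> 'a mgraph" where
  "del_verts G X = induced G (verts G - X)"

definition has_cycle :: "'a mgraph \<Rightarrow> bool" where
  "has_cycle G \<longleftrightarrow>
     (\<exists>v. Upair v v \<in># edges G)
   \<or> (\<exists>u v. u \<noteq> v \<and> count (edges G) (Upair u v) \<ge> 2)
   \<or> (\<exists>vs. length vs \<ge> 3 \<and> distinct vs \<and> set vs \<subseteq> verts G \<and>
        (\<forall>i<length vs. Upair (vs ! i) (vs ! ((i + 1) mod length vs)) \<in># edges G))"

definition acyclic_mg :: "'a mgraph \<Rightarrow> bool" where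
  "acyclic_mg G \<longleftrightarrow> \<not> has_cycle G"

definition is_fvs :: "'a mgraph \<Rightarrow> 'a set \<Rightarrow> bool" where
  "is_fvs G X \<longleftrightarrow> X \<subseteq> verts G \<and> acyclic_mg (del_verts G X)"

definition fvs :: "'a mgraph \<Rightarrow> nat" where
  "fvs G = Min (card ` {X. is_fvs G X})"

definition is_min_fvs :: "'a mgraph \<Rightarrow> 'a set \<Rightarrow> bool" where
  "is_min_fvs G X \<longleftrightarrow> is_fvs G X \<and> card X = fvs G"

definition e_between :: "'a mgraph \<Rightarrow> 'a set \<Rightarrow> 'a set \<Rightarrow> nat" where
  "e_between G X Y = size (filter_mset (\<lambda>e. \<exists>x\<in>X. \<exists>y\<in>Y. e = Upair x y) (edges G))"

definition adj_rel :: "'a mgraph \<Rightarrow> ('a \<times> 'a) set" where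
  "adj_rel G = {(u, v). Upair u v \<in># edges G}"

definition component :: "'a mgraph \<Rightarrow> 'a \<Rightarrow> 'a set" where
  "component G v = {u. (v, u) \<in> (adj_rel G)\<^sup>*}"

text \<open>Feedback vertex cut: trees of G[F] are its connected components.\<close>
definition is_fvc :: "'a mgraph \<Rightarrow> 'a set \<Rightarrow> 'a set \<Rightarrow> bool" where
  "is_fvc G C F \<longleftrightarrow> C \<subseteq> verts G \<and> F \<subseteq> verts G \<and> C \<inter> F = {} \<and>
     acyclic_mg (induced G F) \<and>
     (\<forall>v\<in>F. e_between G (component (induced G F) v) (verts G - (C \<union> F)) \<le> 1)"

definition is_antler :: "'a mgraph \<Rightarrow> 'a set \<Rightarrow> 'a set \<Rightarrow> bool" where
  "is_antler G C F \<longleftrightarrow> is_fvc G C F \<and> card C \<le> fvs (induced G (C \<union> F))"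

definition is_certificate :: "'a mgraph \<Rightarrow> 'a set \<Rightarrow> 'a mgraph \<Rightarrow> bool" where
  "is_certificate G C H \<longleftrightarrow> subgraph H G \<and> is_min_fvs H C"

definition is_certificate_order :: "'a mgraph \<Rightarrow> 'a set \<Rightarrow> nat \<Rightarrow> 'a mgraph \<Rightarrow> bool" where
  "is_certificate_order G C z H \<longleftrightarrow> is_certificate G C H \<and>
     (\<forall>v\<in>verts H. let H' = induced H (component H v) in
        fvs H' = card (C \<inter> verts H') \<and> card (C \<inter> verts H') \<le> z)"

definition is_z_antler :: "'a mgraph \<Rightarrow> nat \<Rightarrow> 'a set \<Rightarrow> 'a set \<Rightarrow> bool" where
  "is_z_antler G z C F \<longleftrightarrow> is_antler G C F \<and>
     (\<exists>H. is_certificate_order (induced G (C \<union> F)) C z H)"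

end

theory Submission
  imports Defs
begin

text \<open>
A feedback vertex cut (C, F) separates F from every cycle that avoids C: a cycle meeting a
tree T of G[F] cannot stay inside the forest G[F], so it leaves T and comes back to T along
two different edges between T and V(G) - (C \<union> F), while the cut allows at most one such edge.

Hence C together with a feedback vertex set of G - (C \<union> F) is a feedback vertex set of G.
For an antler it is a minimum one, since every feedback vertex set X of G splits into
X \<inter> (C \<union> F), which has at least fvs G[C \<union> F] \<ge> |C| elements, and a feedback vertex set
of G - (C \<union> F).

For (ii), let H be a certificate of the z-antler (Ch, Fh). Comparing the two antlers in both
directions gives |Ch \<inter> (C \<union> F)| = |(Ch \<union> Fh) \<inter> C|. Then Ch - (C \<union> F) is a minimum feedback
vertex set of H - (C \<union> F), because adding C \<inter> V(H) to a smaller one would give a feedback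
vertex set of H smaller than Ch. Minimum feedback vertex sets restrict to minimum feedback
vertex sets of connected components, so H - (C \<union> F) is a certificate of order z for the
feedback vertex cut (Ch - (C \<union> F), Fh - (C \<union> F)) of G - (C \<union> F).
\<close>

lemma verts_induced [simp]: "verts (induced G X) = verts G \<inter> X"
  by (simp add: induced_def verts_def)

lemma edges_induced [simp]: "edges (induced G X) = filter_mset (\<lambda>e. set_uprod e \<subseteq> X) (edges G)"
  by (simp add: induced_def edges_def)

lemma induced_induced [simp]: "induced (induced G X) Y = induced G (X \<inter> Y)"
  by (simp add: induced_def verts_def edges_def filter_filter_mset Int_assoc conj_commute)

lemma Upair_commute: "Upair a b = Upair b a"
  by simp

lemma add_mset_pair_subset: "a \<in># M \<Longrightarrow> b \<in># M \<Longrightarrow> a \<noteq> b \<Longrightarrow> {#a, b#} \<subseteq># M"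
  by (simp add: insert_subset_eq_iff in_diff_count)

lemma mgraph_induced: "mgraph G \<Longrightarrow> mgraph (induced G X)"
  by (auto simp: mgraph_def)

lemma mgraph_del_verts: "mgraph G \<Longrightarrow> mgraph (del_verts G K)"
  by (simp add: del_verts_def mgraph_induced)

lemma mgraph_edge_verts: "mgraph G \<Longrightarrow> Upair u v \<in># edges G \<Longrightarrow> u \<in> verts G \<and> v \<in> verts G"
  by (fastforce simp: mgraph_def)

lemma subgraph_del_verts:
  assumes "subgraph H G"
  shows "subgraph (del_verts H K) (del_verts G K)"
proof -
  have "filter_mset (\<lambda>e. set_uprod e \<subseteq> verts H - K) (edges H)
      \<subseteq># filter_mset (\<lambda>e. set_uprod e \<subseteq> verts G - K) (edges G)"
    using assms by (intro filter_mset_mono_strong) (auto simp: subgraph_def)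
  then show ?thesis
    using assms by (auto simp: subgraph_def del_verts_def mgraph_induced)
qed

section \<open>Cycles of induced subgraphs\<close>

definition is_cycle_list :: "'a list \<Rightarrow> 'a uprod multiset \<Rightarrow> bool" where
  "is_cycle_list vs E \<longleftrightarrow> length vs \<ge> 3 \<and> distinct vs \<and>
     (\<forall>i<length vs. Upair (vs ! i) (vs ! (Suc i mod length vs)) \<in># E)"

lemma has_cycle_induced_iff:
  "has_cycle (induced G X) \<longleftrightarrow>
     (\<exists>v\<in>X. Upair v v \<in># edges G)
   \<or> (\<exists>u\<in>X. \<exists>v\<in>X. u \<noteq> v \<and> 2 \<le> count (edges G) (Upair u v))
   \<or> (\<exists>vs. is_cycle_list vs (edges G) \<and> set vs \<subseteq> verts G \<inter> X)"
proof -
  have "(\<forall>i<length vs. Upair (vs ! i) (vs ! (Suc i mod length vs)) \<in># edges G) \<longleftrightarrow>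
      (\<forall>i<length vs. Upair (vs ! i) (vs ! (Suc i mod length vs)) \<in># edges (induced G X))"
    if "set vs \<subseteq> X" "length vs \<ge> 3" for vs
    using that by (auto intro!: subsetD[OF _ nth_mem] mod_less_divisor)
  then show ?thesis
    unfolding has_cycle_def is_cycle_list_def by (auto split: if_splits)
qed

lemma has_cycle_inducedE:
  assumes "has_cycle (induced G X)"
  obtains (loop) v where "v \<in> X" "Upair v v \<in># edges G"
  | (parallel) u v where "u \<in> X" "v \<in> X" "u \<noteq> v" "2 \<le> count (edges G) (Upair u v)"
  | (cycle) vs where "is_cycle_list vs (edges G)" "set vs \<subseteq> verts G \<inter> X"
  using assms unfolding has_cycle_induced_iff by blast

lemma is_cycle_list_mono: "is_cycle_list vs E \<Longrightarrow> E \<subseteq># E' \<Longrightarrow> is_cycle_list vs E'"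
  by (auto simp: is_cycle_list_def mset_subset_eqD)

lemma is_cycle_list_verts:
  assumes "mgraph G" "is_cycle_list vs (edges G)"
  shows "set vs \<subseteq> verts G"
proof
  fix x assume "x \<in> set vs"
  then obtain i where i: "i < length vs" "x = vs ! i" by (auto simp: in_set_conv_nth)
  then have "Upair x (vs ! (Suc i mod length vs)) \<in># edges G"
    using assms(2) by (simp add: is_cycle_list_def)
  then show "x \<in> verts G"
    using mgraph_edge_verts[OF assms(1)] by blast
qed

lemma has_cycle_mono:
  assumes "has_cycle G" "verts G \<subseteq> verts G'" "edges G \<subseteq># edges G'"
  shows "has_cycle G'"
proof -
  have count_mono: "count (edges G) e \<le> count (edges G') e" for e
    using assms(3) by (simp add: mset_subset_eq_count)
  have mem_mono: "e \<in># edges G \<Longrightarrow> e \<in># edges G'" for e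
    using assms(3) by (rule mset_subset_eqD)
  from assms(1)[unfolded has_cycle_def] show ?thesis
  proof (elim disjE exE conjE)
    fix u v assume "u \<noteq> v" "2 \<le> count (edges G) (Upair u v)"
    moreover have "2 \<le> count (edges G') (Upair u v)"
      using calculation(2) count_mono by (meson le_trans)
    ultimately show ?thesis unfolding has_cycle_def by blast
  next
    fix vs assume "3 \<le> length vs" "distinct vs" "set vs \<subseteq> verts G"
      "\<forall>i<length vs. Upair (vs ! i) (vs ! ((i + 1) mod length vs)) \<in># edges G"
    then show ?thesis unfolding has_cycle_def
      using assms(2) mem_mono by (meson subset_trans)
  qed (use mem_mono in \<open>auto simp: has_cycle_def\<close>)
qed

lemma has_cycle_induced_mono: "has_cycle (induced G X) \<Longrightarrow> X \<subseteq> Y \<Longrightarrow> has_cycle (induced G Y)"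
  by (erule has_cycle_mono) (auto intro!: filter_mset_mono_strong)

lemma not_has_cycle_induced_empty: "\<not> has_cycle (induced G {})"
  by (auto simp: has_cycle_def)

lemma cyclic_exit:
  fixes P :: "nat \<Rightarrow> bool"
  assumes "P a" "\<not> P b" "a < n" "b < n"
  obtains i where "i < n" "P i" "\<not> P (Suc i mod n)"
proof -
  have False if step: "\<forall>i<n. P i \<longrightarrow> P (Suc i mod n)"
  proof -
    have "P ((a + d) mod n)" for d
    proof (induction d)
      case 0
      show ?case using assms by simp
    next
      case (Suc d)
      have "(a + d) mod n < n" using assms by simp
      then have "P (Suc ((a + d) mod n) mod n)" using step Suc by blast
      then show ?case by (simp add: mod_Suc_eq)
    qed
    from this[of "n - a + b"] show False using assms by simp
  qed
  then show ?thesis using that by blast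
qed

lemma cyclic_successor_twice:
  fixes i k n :: nat
  assumes "3 \<le> n" "k < n" "i = Suc k mod n" "k = Suc i mod n"
  shows False
proof -
  have "Suc (Suc k) mod n = k"
    by (metis assms(3,4) mod_Suc_eq)
  then show False
    using assms(1,2) by (cases "Suc (Suc k) < n") (auto simp: mod_if split: if_splits)
qed

lemma is_cycle_list_leaves_twice:
  assumes cyc: "is_cycle_list vs E"
    and "vs ! a \<in> T" "vs ! b \<notin> T" "a < length vs" "b < length vs"
  obtains x y x' y' where "{#Upair x y, Upair x' y'#} \<subseteq># E"
    "x \<in> T" "x' \<in> T" "y \<notin> T" "y' \<notin> T" "y \<in> set vs" "y' \<in> set vs"
proof -
  let ?n = "length vs"
  have n: "3 \<le> ?n" and dist: "distinct vs"
    and edge: "\<And>i. i < ?n \<Longrightarrow> Upair (vs ! i) (vs ! (Suc i mod ?n)) \<in># E"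
    using cyc by (auto simp: is_cycle_list_def)
  have mod_lt: "Suc l mod ?n < ?n" for l
    using n by (intro mod_less_divisor) auto
  obtain i where i: "i < ?n" "vs ! i \<in> T" "vs ! (Suc i mod ?n) \<notin> T"
    using cyclic_exit[where P = "\<lambda>i. vs ! i \<in> T", OF assms(2-5)] by blast
  obtain k where k: "k < ?n" "vs ! k \<notin> T" "vs ! (Suc k mod ?n) \<in> T"
    using cyclic_exit[where P = "\<lambda>i. vs ! i \<notin> T", OF assms(3) _ assms(5,4)] assms(2) by blast
  have entry: "Upair (vs ! (Suc k mod ?n)) (vs ! k) \<in># E"
    using edge[OF k(1)] by (simp add: Upair_commute)
  have "Upair (vs ! i) (vs ! (Suc i mod ?n)) \<noteq> Upair (vs ! (Suc k mod ?n)) (vs ! k)"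
  proof
    assume "Upair (vs ! i) (vs ! (Suc i mod ?n)) = Upair (vs ! (Suc k mod ?n)) (vs ! k)"
    then have "vs ! i = vs ! (Suc k mod ?n)" "vs ! k = vs ! (Suc i mod ?n)"
      using i(2) k(2) by auto
    then have "i = Suc k mod ?n" "k = Suc i mod ?n"
      using dist i(1) k(1) mod_lt by (simp_all add: nth_eq_iff_index_eq)
    then show False
      using n k(1) cyclic_successor_twice by blast
  qed
  then have "{#Upair (vs ! i) (vs ! (Suc i mod ?n)), Upair (vs ! (Suc k mod ?n)) (vs ! k)#} \<subseteq># E"
    using edge[OF i(1)] entry by (rule add_mset_pair_subset[rotated 2])
  moreover have "vs ! (Suc i mod ?n) \<in> set vs" "vs ! k \<in> set vs"
    using mod_lt k(1) by simp_all
  ultimately show ?thesis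
    by (rule that[OF _ i(2) k(3) i(3) k(2)])
qed

lemma has_cycle_induced_split:
  assumes "has_cycle (induced G X)"
    and closed: "\<And>u v. Upair u v \<in># edges G \<Longrightarrow> u \<in> D \<longleftrightarrow> v \<in> D"
  shows "has_cycle (induced G (X \<inter> D)) \<or> has_cycle (induced G (X - D))"
proof -
  have side: "set vs \<subseteq> D \<or> set vs \<inter> D = {}" if "is_cycle_list vs (edges G)" for vs
  proof (rule ccontr)
    assume "\<not> ?thesis"
    then obtain a b where "vs ! a \<in> D" "vs ! b \<notin> D" "a < length vs" "b < length vs"
      by (auto simp: in_set_conv_nth)
    then obtain i where "i < length vs" "vs ! i \<in> D" "vs ! (Suc i mod length vs) \<notin> D"
      by (rule cyclic_exit[where P = "\<lambda>i. vs ! i \<in> D"])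
    then show False
      using that closed by (auto simp: is_cycle_list_def)
  qed
  from assms(1) show ?thesis
  proof (cases rule: has_cycle_inducedE)
    case (loop v)
    then show ?thesis unfolding has_cycle_induced_iff by (cases "v \<in> D") auto
  next
    case (parallel u v)
    moreover have "u \<in> D \<longleftrightarrow> v \<in> D"
      using parallel closed by (metis count_eq_zero_iff not_numeral_le_zero)
    ultimately show ?thesis unfolding has_cycle_induced_iff by (cases "u \<in> D") auto
  next
    case (cycle vs)
    then show ?thesis
      using side[of vs] unfolding has_cycle_induced_iff by blast
  qed
qed

section \<open>Connected components\<close>

lemma component_self: "v \<in> component G v"
  by (simp add: component_def)

lemma component_edge: "u \<in> component G v \<Longrightarrow> Upair u w \<in># edges G \<Longrightarrow> w \<in> component G v"
  unfolding component_def adj_rel_def by (metis (mono_tags) case_prodI mem_Collect_eq rtrancl.rtrancl_into_rtrancl)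

lemma component_closed:
  assumes "Upair u w \<in># edges G"
  shows "u \<in> component G v \<longleftrightarrow> w \<in> component G v"
proof -
  have "Upair w u \<in># edges G"
    using assms by (simp add: Upair_commute)
  then show ?thesis
    using assms component_edge[of u G v w] component_edge[of w G v u] by blast
qed

lemma component_mono:
  assumes "edges H \<subseteq># edges G"
  shows "component H v \<subseteq> component G v"
proof -
  have "adj_rel H \<subseteq> adj_rel G"
    using assms by (auto simp: adj_rel_def dest: mset_subset_eqD)
  then show ?thesis
    unfolding component_def using rtrancl_mono by blast
qed

lemma component_induced_subset: "component (induced G F) v \<subseteq> insert v F"
proof
  fix u assume "u \<in> component (induced G F) v"
  then have "(v, u) \<in> (adj_rel (induced G F))\<^sup>*" by (simp add: component_def)
  then show "u \<in> insert v F"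
    by induction (auto simp: adj_rel_def)
qed

section \<open>Feedback vertex sets\<close>

lemma is_fvs_iff: "is_fvs G X \<longleftrightarrow> X \<subseteq> verts G \<and> \<not> has_cycle (induced G (verts G - X))"
  by (simp add: is_fvs_def acyclic_mg_def del_verts_def)

lemma finite_fvs_sets: "mgraph G \<Longrightarrow> finite {X. is_fvs G X}"
  by (rule finite_subset[of _ "Pow (verts G)"]) (auto simp: is_fvs_def mgraph_def)

lemma finite_fvs: "mgraph G \<Longrightarrow> is_fvs G X \<Longrightarrow> finite X"
  unfolding mgraph_def is_fvs_def by (meson finite_subset)

lemma fvs_le: "mgraph G \<Longrightarrow> is_fvs G X \<Longrightarrow> fvs G \<le> card X"
  unfolding fvs_def using finite_fvs_sets[of G] by (auto intro: Min_le)

lemma ex_min_fvs: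
  assumes "mgraph G"
  obtains X where "is_min_fvs G X"
proof -
  have "is_fvs G (verts G)"
    by (simp add: is_fvs_iff not_has_cycle_induced_empty)
  then have "fvs G \<in> card ` {X. is_fvs G X}"
    unfolding fvs_def using finite_fvs_sets[OF assms] by (intro Min_in) auto
  then obtain X where "is_fvs G X" "card X = fvs G"
    by auto
  then show ?thesis
    using that by (simp add: is_min_fvs_def)
qed

lemma is_min_fvsI:
  assumes "mgraph G" "is_fvs G X" "\<And>Y. is_min_fvs G Y \<Longrightarrow> card X \<le> card Y"
  shows "is_min_fvs G X"
proof -
  obtain Y where Y: "is_min_fvs G Y"
    using ex_min_fvs[OF assms(1)] .
  have "card X \<le> fvs G"
    using assms(3)[OF Y] Y by (simp add: is_min_fvs_def)
  then show ?thesis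
    using assms(2) fvs_le[OF assms(1,2)] by (simp add: is_min_fvs_def)
qed

lemma is_fvs_induced:
  assumes "is_fvs G X"
  shows "is_fvs (induced G Y) (X \<inter> Y)"
  unfolding is_fvs_iff
proof (intro conjI notI)
  show "X \<inter> Y \<subseteq> verts (induced G Y)"
    using assms by (auto simp: is_fvs_iff)
next
  assume "has_cycle (induced (induced G Y) (verts (induced G Y) - X \<inter> Y))"
  then have "has_cycle (induced G (verts G - X))"
    by simp (rule has_cycle_induced_mono, blast+)
  then show False
    using assms by (simp add: is_fvs_iff)
qed

lemma is_fvs_del_verts:
  assumes "is_fvs G X"
  shows "is_fvs (del_verts G K) (X - K)"
proof -
  have "X \<inter> (verts G - K) = X - K"
    using assms by (auto simp: is_fvs_def)
  then show ?thesis
    using is_fvs_induced[OF assms, of "verts G - K"] by (simp add: del_verts_def)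
qed

lemma fvs_subgraph_le:
  assumes "mgraph G" "subgraph H G"
  shows "fvs H \<le> fvs G"
proof -
  obtain X where X: "is_min_fvs G X"
    using ex_min_fvs[OF assms(1)] .
  have "is_fvs H (X \<inter> verts H)"
    unfolding is_fvs_iff
  proof (intro conjI notI)
    assume "has_cycle (induced H (verts H - X \<inter> verts H))"
    moreover have "verts H - X \<inter> verts H \<subseteq> verts G - X"
      using assms(2) by (auto simp: subgraph_def)
    ultimately have "has_cycle (induced G (verts G - X))"
      using assms(2) by (elim has_cycle_mono) (auto simp: subgraph_def intro!: filter_mset_mono_strong)
    then show False
      using X by (simp add: is_min_fvs_def is_fvs_iff)
  qed simp
  moreover have "mgraph H"
    using assms(2) by (simp add: subgraph_def)
  ultimately have "fvs H \<le> card (X \<inter> verts H)"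
    using fvs_le by blast
  also have "\<dots> \<le> card X"
    using finite_fvs[OF assms(1)] X unfolding is_min_fvs_def by (intro card_mono) auto
  finally have "fvs H \<le> card X" .
  then show ?thesis
    using X by (simp add: is_min_fvs_def)
qed

lemma min_fvs_induced_closed:
  assumes "mgraph H" "is_min_fvs H X"
    and closed: "\<And>u v. Upair u v \<in># edges H \<Longrightarrow> u \<in> D \<longleftrightarrow> v \<in> D"
  shows "is_min_fvs (induced H D) (X \<inter> D)"
proof (rule is_min_fvsI)
  show "mgraph (induced H D)" "is_fvs (induced H D) (X \<inter> D)"
    using assms(1,2) by (simp_all add: mgraph_induced is_fvs_induced is_min_fvs_def)
next
  fix Y assume Y: "is_min_fvs (induced H D) Y"
  have "is_fvs H ((X - D) \<union> Y)"
    unfolding is_fvs_iff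
  proof (intro conjI notI)
    show "X - D \<union> Y \<subseteq> verts H"
      using assms(2) Y by (auto simp: is_min_fvs_def is_fvs_def)
  next
    assume "has_cycle (induced H (verts H - (X - D \<union> Y)))"
    then consider "has_cycle (induced H ((verts H - (X - D \<union> Y)) \<inter> D))"
      | "has_cycle (induced H ((verts H - (X - D \<union> Y)) - D))"
      using has_cycle_induced_split closed by blast
    then show False
    proof cases
      case 1
      then have "has_cycle (induced H (D \<inter> (verts H \<inter> D - Y)))"
        by (rule has_cycle_induced_mono) blast
      then show False using Y by (simp add: is_min_fvs_def is_fvs_iff)
    next
      case 2
      then have "has_cycle (induced H (verts H - X))"
        by (rule has_cycle_induced_mono) blast
      then show False using assms(2) by (simp add: is_min_fvs_def is_fvs_iff)
    qed
  qed
  then have "card X \<le> card ((X - D) \<union> Y)"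
    using assms(1,2) fvs_le by (fastforce simp: is_min_fvs_def)
  also have "\<dots> \<le> card (X - D) + card Y"
    by (rule card_Un_le)
  moreover have "card X = card (X \<inter> D) + card (X - D)"
    using finite_fvs[OF assms(1)] assms(2) card_Int_Diff unfolding is_min_fvs_def by blast
  ultimately show "card (X \<inter> D) \<le> card Y"
    by linarith
qed

section \<open>Feedback vertex cuts\<close>

lemma fvc_acyclic: "is_fvc G C F \<Longrightarrow> \<not> has_cycle (induced G F)"
  by (simp add: is_fvc_def acyclic_mg_def)

lemma fvc_two_exits:
  assumes fvc: "is_fvc G C F" and "u \<in> F"
    and "{#Upair a b, Upair c d#} \<subseteq># edges G"
    and "a \<in> component (induced G F) u" "c \<in> component (induced G F) u"
    and "b \<in> verts G - (C \<union> F)" "d \<in> verts G - (C \<union> F)"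
  shows False
proof -
  let ?T = "component (induced G F) u" and ?Y = "verts G - (C \<union> F)"
  let ?P = "\<lambda>e. \<exists>x\<in>?T. \<exists>y\<in>?Y. e = Upair x y"
  have "{#Upair a b, Upair c d#} = filter_mset ?P {#Upair a b, Upair c d#}"
    using assms(4-7) by auto
  also have "\<dots> \<subseteq># filter_mset ?P (edges G)"
    using assms(3) by (rule multiset_filter_mono)
  finally have "2 \<le> e_between G ?T ?Y"
    unfolding e_between_def using size_mset_mono by fastforce
  moreover have "e_between G ?T ?Y \<le> 1"
    using fvc \<open>u \<in> F\<close> unfolding is_fvc_def by blast
  ultimately show False
    by simp
qed

lemma fvc_component_exit:
  assumes G: "mgraph G" and "u \<in> F" and x: "x \<in> component (induced G F) u"
    and xy: "Upair x y \<in># edges G" and "y \<notin> component (induced G F) u" "y \<notin> C"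
  shows "y \<in> verts G - (C \<union> F)"
proof -
  have "x \<in> F"
    using component_induced_subset[of G F u] assms(2) x by blast
  have "y \<notin> F"
  proof
    assume "y \<in> F"
    then have "Upair x y \<in># edges (induced G F)"
      using xy \<open>x \<in> F\<close> by simp
    then show False
      using component_edge[OF x] assms(5) by blast
  qed
  then show ?thesis
    using assms(6) mgraph_edge_verts[OF G xy] by blast
qed

lemma fvc_loop_notin:
  assumes "is_fvc G C F" "Upair v v \<in># edges G"
  shows "v \<notin> F"
proof
  assume "v \<in> F"
  then have "has_cycle (induced G F)"
    using assms(2) unfolding has_cycle_induced_iff by blast
  then show False
    using fvc_acyclic[OF assms(1)] by blast
qed

lemma fvc_parallel_notin:
  assumes G: "mgraph G" and fvc: "is_fvc G C F"
    and "u \<noteq> v" "2 \<le> count (edges G) (Upair u v)" "v \<notin> C"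
  shows "u \<notin> F"
proof
  assume u: "u \<in> F"
  have "Upair u v \<in># edges G"
    using assms(4) by (metis count_eq_zero_iff not_numeral_le_zero)
  show False
  proof (cases "v \<in> F")
    case True
    then have "has_cycle (induced G F)"
      using u assms(3,4) unfolding has_cycle_induced_iff by blast
    then show False
      using fvc_acyclic[OF fvc] by blast
  next
    case False
    have "{#Upair u v, Upair u v#} \<subseteq># edges G"
      using assms(4) by (simp add: subseteq_mset_def)
    moreover have "v \<in> verts G - (C \<union> F)"
      using mgraph_edge_verts[OF G \<open>Upair u v \<in># edges G\<close>] False assms(5) by blast
    ultimately show False
      using fvc_two_exits[OF fvc u _ component_self component_self] by blast
  qed
qed

lemma fvc_cycle_list_disjoint:
  assumes G: "mgraph G" and fvc: "is_fvc G C F"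
    and cyc: "is_cycle_list vs (edges G)" and "set vs \<inter> C = {}"
  shows "set vs \<inter> F = {}"
proof (rule ccontr)
  assume "set vs \<inter> F \<noteq> {}"
  then obtain j where j: "j < length vs" "vs ! j \<in> F"
    by (auto simp: in_set_conv_nth)
  let ?T = "component (induced G F) (vs ! j)"
  have "\<not> set vs \<subseteq> F"
  proof
    assume "set vs \<subseteq> F"
    then have "has_cycle (induced G F)"
      using cyc is_cycle_list_verts[OF G cyc] unfolding has_cycle_induced_iff by blast
    then show False
      using fvc_acyclic[OF fvc] by blast
  qed
  then obtain b where b: "b < length vs" "vs ! b \<notin> F"
    by (metis in_set_conv_nth subsetI)
  moreover have "?T \<subseteq> F"
    using component_induced_subset[of G F "vs ! j"] j(2) by (simp add: insert_absorb)
  ultimately have "vs ! b \<notin> ?T"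
    by blast
  then obtain x y x' y' where pair: "{#Upair x y, Upair x' y'#} \<subseteq># edges G"
    and T: "x \<in> ?T" "x' \<in> ?T" "y \<notin> ?T" "y' \<notin> ?T" "y \<in> set vs" "y' \<in> set vs"
    by (rule is_cycle_list_leaves_twice[OF cyc component_self _ j(1) b(1)])
  have e: "Upair x y \<in># edges G" "Upair x' y' \<in># edges G"
    using mset_subset_eqD[OF pair] by simp_all
  have "y \<notin> C" "y' \<notin> C"
    using T(5,6) assms(4) by blast+
  then show False
    using fvc_two_exits[OF fvc j(2) pair T(1,2)]
      fvc_component_exit[OF G j(2) T(1) e(1) T(3)] fvc_component_exit[OF G j(2) T(2) e(2) T(4)]
    by blast
qed

lemma has_cycle_induced_Diff_fvc:
  assumes G: "mgraph G" and fvc: "is_fvc G C F" and HG: "edges H \<subseteq># edges G"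
    and cyc: "has_cycle (induced H X)" and XC: "X \<inter> C = {}"
  shows "has_cycle (induced H (X - F))"
  using cyc
proof (cases rule: has_cycle_inducedE)
  case (loop v)
  then have "v \<notin> F"
    using fvc_loop_notin[OF fvc] HG by (blast dest: mset_subset_eqD)
  then show ?thesis
    using loop unfolding has_cycle_induced_iff by blast
next
  case (parallel u v)
  have uv: "2 \<le> count (edges G) (Upair u v)"
    using parallel(4) HG by (meson le_trans mset_subset_eq_count)
  then have vu: "2 \<le> count (edges G) (Upair v u)"
    by (simp add: Upair_commute)
  have "u \<notin> C" "v \<notin> C"
    using parallel(1,2) XC by blast+
  then have "u \<notin> F" "v \<notin> F"
    using fvc_parallel_notin[OF G fvc parallel(3) uv] fvc_parallel_notin[OF G fvc parallel(3)[symmetric] vu]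
    by simp_all
  then show ?thesis
    using parallel unfolding has_cycle_induced_iff by blast
next
  case (cycle vs)
  have "set vs \<inter> F = {}"
    using fvc_cycle_list_disjoint[OF G fvc is_cycle_list_mono[OF cycle(1) HG]] cycle(2) XC by blast
  then show ?thesis
    using cycle unfolding has_cycle_induced_iff by blast
qed

lemma is_fvs_Un_fvc:
  assumes G: "mgraph G" and fvc: "is_fvc G C F" and HG: "edges H \<subseteq># edges G"
    and Y: "is_fvs (del_verts H (C \<union> F)) Y"
  shows "is_fvs H (Y \<union> (C \<inter> verts H))"
  unfolding is_fvs_iff
proof (intro conjI notI)
  show "Y \<union> (C \<inter> verts H) \<subseteq> verts H"
    using Y by (auto simp: is_fvs_def del_verts_def)
next
  assume "has_cycle (induced H (verts H - (Y \<union> (C \<inter> verts H))))"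
  then have "has_cycle (induced H (verts H - (Y \<union> (C \<inter> verts H)) - F))"
    by (rule has_cycle_induced_Diff_fvc[OF G fvc HG]) blast
  then have "has_cycle (induced H ((verts H - (C \<union> F)) \<inter> (verts H \<inter> (verts H - (C \<union> F)) - Y)))"
    by (rule has_cycle_induced_mono) blast
  moreover have "\<not> has_cycle (induced H ((verts H - (C \<union> F)) \<inter> (verts H \<inter> (verts H - (C \<union> F)) - Y)))"
    using Y by (simp add: is_fvs_iff del_verts_def)
  ultimately show False
    by contradiction
qed

lemma is_fvs_induced_two_fvc:
  assumes G: "mgraph G" and fvc1: "is_fvc G C1 F1" and fvc2: "is_fvc G C2 F2"
  shows "is_fvs (induced G (C1 \<union> F1)) ((C2 \<inter> (C1 \<union> F1)) \<union> (C1 - (C2 \<union> F2)))"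
    (is "is_fvs _ ?Z")
  unfolding is_fvs_iff
proof (intro conjI notI)
  show "?Z \<subseteq> verts (induced G (C1 \<union> F1))"
    using fvc1 by (auto simp: is_fvc_def)
next
  let ?X = "(C1 \<union> F1) \<inter> (verts G \<inter> (C1 \<union> F1) - ?Z)"
  assume "has_cycle (induced (induced G (C1 \<union> F1)) (verts (induced G (C1 \<union> F1)) - ?Z))"
  then have "has_cycle (induced G ?X)"
    by simp
  then have "has_cycle (induced G (?X - F2))"
    by (rule has_cycle_induced_Diff_fvc[OF G fvc2 subset_mset.order_refl]) blast
  then have "has_cycle (induced G (?X - F2 - F1))"
    by (rule has_cycle_induced_Diff_fvc[OF G fvc1 subset_mset.order_refl]) blast
  moreover have "?X - F2 - F1 = {}"
    by blast
  ultimately show False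
    using not_has_cycle_induced_empty by metis
qed

lemma fvc_del_verts:
  assumes fvc: "is_fvc G C F"
  shows "is_fvc (del_verts G K) (C - K) (F - K)"
  unfolding is_fvc_def
proof (intro conjI ballI)
  show "C - K \<subseteq> verts (del_verts G K)" "F - K \<subseteq> verts (del_verts G K)" "(C - K) \<inter> (F - K) = {}"
    using fvc by (auto simp: is_fvc_def del_verts_def)
  have "\<not> has_cycle (induced (del_verts G K) (F - K))"
  proof
    assume "has_cycle (induced (del_verts G K) (F - K))"
    then have "has_cycle (induced G F)"
      unfolding del_verts_def by simp (rule has_cycle_induced_mono, blast+)
    then show False
      using fvc_acyclic[OF fvc] by blast
  qed
  then show "acyclic_mg (induced (del_verts G K) (F - K))"
    by (simp add: acyclic_mg_def)
next
  fix v assume "v \<in> F - K"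
  have "edges (del_verts G K) \<subseteq># edges G"
    by (simp add: del_verts_def)
  moreover have "edges (induced (del_verts G K) (F - K)) \<subseteq># edges (induced G F)"
    by (auto simp: del_verts_def intro!: filter_mset_mono_strong)
  then have "component (induced (del_verts G K) (F - K)) v \<subseteq> component (induced G F) v"
    by (rule component_mono)
  moreover have "verts (del_verts G K) - (C - K \<union> (F - K)) \<subseteq> verts G - (C \<union> F)"
    by (auto simp: del_verts_def)
  ultimately have "e_between (del_verts G K) (component (induced (del_verts G K) (F - K)) v)
      (verts (del_verts G K) - (C - K \<union> (F - K)))
    \<le> e_between G (component (induced G F) v) (verts G - (C \<union> F))"
    unfolding e_between_def by (intro size_mset_mono filter_mset_mono_strong) blast+
  also have "\<dots> \<le> 1"
    using fvc \<open>v \<in> F - K\<close> by (simp add: is_fvc_def)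
  finally show "e_between (del_verts G K) (component (induced (del_verts G K) (F - K)) v)
      (verts (del_verts G K) - (C - K \<union> (F - K))) \<le> 1" .
qed

lemma min_fvs_del_fvc:
  assumes G: "mgraph G" and fvc: "is_fvc G C F"
    and H: "mgraph H" "edges H \<subseteq># edges G" and X: "is_min_fvs H X"
    and le: "card (C \<inter> verts H) \<le> card (X \<inter> (C \<union> F))"
  shows "is_min_fvs (del_verts H (C \<union> F)) (X - (C \<union> F))"
proof (rule is_min_fvsI)
  show "mgraph (del_verts H (C \<union> F))"
    using H(1) by (rule mgraph_del_verts)
  show "is_fvs (del_verts H (C \<union> F)) (X - (C \<union> F))"
    using X by (simp add: is_min_fvs_def is_fvs_del_verts)
next
  fix Y assume Y: "is_min_fvs (del_verts H (C \<union> F)) Y"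
  then have "is_fvs H (Y \<union> (C \<inter> verts H))"
    using is_fvs_Un_fvc[OF G fvc H(2)] by (simp add: is_min_fvs_def)
  then have "card X \<le> card (Y \<union> (C \<inter> verts H))"
    using fvs_le[OF H(1)] X by (simp add: is_min_fvs_def)
  also have "\<dots> \<le> card Y + card (X \<inter> (C \<union> F))"
    using card_Un_le[of Y "C \<inter> verts H"] le by linarith
  finally show "card (X - (C \<union> F)) \<le> card Y"
    using card_Int_Diff[of X "C \<union> F"] finite_fvs[OF H(1)] X by (simp add: is_min_fvs_def)
qed

section \<open>Antlers\<close>

lemma antler_card_add_fvs_le:
  assumes G: "mgraph G" and ant: "is_antler G C F"
  shows "card C + fvs (del_verts G (C \<union> F)) \<le> fvs G"
proof -
  obtain X where X: "is_min_fvs G X"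
    using ex_min_fvs[OF G] .
  then have fvsX: "is_fvs G X" and cardX: "card X = fvs G"
    by (simp_all add: is_min_fvs_def)
  have "card C \<le> fvs (induced G (C \<union> F))"
    using ant by (simp add: is_antler_def)
  also have "\<dots> \<le> card (X \<inter> (C \<union> F))"
    using fvs_le[OF mgraph_induced[OF G] is_fvs_induced[OF fvsX]] .
  finally have "card C \<le> card (X \<inter> (C \<union> F))" .
  moreover have "fvs (del_verts G (C \<union> F)) \<le> card (X - (C \<union> F))"
    using fvs_le[OF mgraph_del_verts[OF G] is_fvs_del_verts[OF fvsX]] .
  moreover have "card X = card (X \<inter> (C \<union> F)) + card (X - (C \<union> F))"
    using finite_fvs[OF G fvsX] by (rule card_Int_Diff)
  ultimately show ?thesis
    using cardX by linarith
qed

lemma min_fvs_Un_antler: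
  assumes G: "mgraph G" and ant: "is_antler G C F"
    and S': "is_min_fvs (del_verts G (C \<union> F)) S'"
  shows "is_min_fvs G (C \<union> S')"
proof (rule is_min_fvsI[OF G])
  have fvc: "is_fvc G C F"
    using ant by (simp add: is_antler_def)
  then have "C \<inter> verts G = C"
    by (auto simp: is_fvc_def)
  then have "is_fvs G (S' \<union> C)"
    using is_fvs_Un_fvc[OF G fvc subset_mset.order_refl, of S'] S' by (simp add: is_min_fvs_def)
  then show "is_fvs G (C \<union> S')"
    by (simp add: Un_commute)
next
  fix Y assume "is_min_fvs G Y"
  have "card (C \<union> S') \<le> card C + fvs (del_verts G (C \<union> F))"
    using S' card_Un_le[of C S'] by (simp add: is_min_fvs_def)
  also have "\<dots> \<le> card Y"
    using antler_card_add_fvs_le[OF G ant] \<open>is_min_fvs G Y\<close> by (simp add: is_min_fvs_def)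
  finally show "card (C \<union> S') \<le> card Y" .
qed

lemma antler_overlap_le:
  assumes G: "mgraph G" and ant: "is_antler G C1 F1" and fvc2: "is_fvc G C2 F2"
  shows "card (C1 \<inter> (C2 \<union> F2)) \<le> card (C2 \<inter> (C1 \<union> F1))"
proof -
  have fvc1: "is_fvc G C1 F1"
    using ant by (simp add: is_antler_def)
  have "finite C1"
    using fvc1 G finite_subset by (auto simp: is_fvc_def mgraph_def)
  have "card C1 \<le> fvs (induced G (C1 \<union> F1))"
    using ant by (simp add: is_antler_def)
  also have "\<dots> \<le> card ((C2 \<inter> (C1 \<union> F1)) \<union> (C1 - (C2 \<union> F2)))"
    using fvs_le[OF mgraph_induced[OF G] is_fvs_induced_two_fvc[OF G fvc1 fvc2]] .
  also have "\<dots> \<le> card (C2 \<inter> (C1 \<union> F1)) + card (C1 - (C2 \<union> F2))"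
    by (rule card_Un_le)
  finally show ?thesis
    using card_Int_Diff[OF \<open>finite C1\<close>, of "C2 \<union> F2"] by linarith
qed

lemma z_antlerI:
  assumes G: "mgraph G" and fvc: "is_fvc G C F"
    and H: "is_certificate_order (induced G (C \<union> F)) C z H"
  shows "is_z_antler G z C F"
proof -
  have "card C = fvs H" and "subgraph H (induced G (C \<union> F))"
    using H by (simp_all add: is_certificate_order_def is_certificate_def is_min_fvs_def)
  then have "card C \<le> fvs (induced G (C \<union> F))"
    using fvs_subgraph_le[OF mgraph_induced[OF G]] by simp
  then show ?thesis
    using fvc H unfolding is_z_antler_def is_antler_def by blast
qed

lemma certificate_order_del_verts:
  assumes cert: "is_certificate_order G0 X z H"
    and min: "is_min_fvs (del_verts H K) (X - K)"
    and sub: "subgraph (del_verts H K) G1"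
  shows "is_certificate_order G1 (X - K) z (del_verts H K)"
  unfolding is_certificate_order_def is_certificate_def Let_def
proof (intro conjI ballI sub min)
  let ?H = "del_verts H K"
  fix v assume v: "v \<in> verts ?H"
  let ?D = "component ?H v"
  have mH: "mgraph H" and X: "is_min_fvs H X"
    using cert by (simp_all add: is_certificate_order_def is_certificate_def subgraph_def)
  have mH': "mgraph ?H"
    using mH by (rule mgraph_del_verts)
  have "is_min_fvs (induced ?H ?D) ((X - K) \<inter> ?D)"
    by (rule min_fvs_induced_closed[OF mH' min component_closed])
  moreover have XD: "(X - K) \<inter> verts (induced ?H ?D) = (X - K) \<inter> ?D"
    using min by (auto simp: is_min_fvs_def is_fvs_def)
  ultimately show "fvs (induced ?H ?D) = card ((X - K) \<inter> verts (induced ?H ?D))"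
    by (simp add: is_min_fvs_def)
  have "?D \<subseteq> component H v"
    by (rule component_mono) (simp add: del_verts_def)
  then have "(X - K) \<inter> ?D \<subseteq> X \<inter> verts (induced H (component H v))"
    using X by (auto simp: is_min_fvs_def is_fvs_def)
  then have "card ((X - K) \<inter> ?D) \<le> card (X \<inter> verts (induced H (component H v)))"
    using finite_fvs[OF mH] X by (simp add: is_min_fvs_def card_mono)
  also have "\<dots> \<le> z"
    using cert v by (simp add: is_certificate_order_def Let_def del_verts_def)
  finally show "card ((X - K) \<inter> verts (induced ?H ?D)) \<le> z"
    using XD by simp
qed

lemma z_antler_del_antler:
  assumes G: "mgraph G" and ant: "is_antler G C F" and za: "is_z_antler G z Ch Fh"
  shows "is_z_antler (del_verts G (C \<union> F)) z (Ch - (C \<union> F)) (Fh - (C \<union> F))"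
    and "card (Ch - (C \<union> F)) + card (C \<inter> (Ch \<union> Fh)) = card Ch"
proof -
  let ?K = "C \<union> F" and ?A = "Ch \<union> Fh"
  obtain H where H: "is_certificate_order (induced G ?A) Ch z H"
    using za by (auto simp: is_z_antler_def)
  have fvc: "is_fvc G C F" and fvch: "is_fvc G Ch Fh" and anth: "is_antler G Ch Fh"
    using ant za by (simp_all add: is_antler_def is_z_antler_def)
  have overlap: "card (Ch \<inter> ?K) = card (C \<inter> ?A)"
    using antler_overlap_le[OF G ant fvch] antler_overlap_le[OF G anth fvc] by simp
  have "finite Ch"
    using fvch G finite_subset by (auto simp: is_fvc_def mgraph_def)
  then show card: "card (Ch - ?K) + card (C \<inter> ?A) = card Ch"
    using card_Int_Diff[of Ch ?K] overlap by simp
  have sub: "subgraph H (induced G ?A)" and min: "is_min_fvs H Ch"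
    using H by (simp_all add: is_certificate_order_def is_certificate_def)
  then have mH: "mgraph H" and HG: "edges H \<subseteq># edges G"
    using multiset_filter_subset subset_mset.order_trans by (fastforce simp: subgraph_def)+
  have "card (C \<inter> verts H) \<le> card (C \<inter> ?A)"
    using fvc sub G finite_subset by (intro card_mono) (auto simp: is_fvc_def subgraph_def mgraph_def)
  then have min': "is_min_fvs (del_verts H ?K) (Ch - ?K)"
    using min_fvs_del_fvc[OF G fvc mH HG min] overlap by simp
  have "?A \<inter> (verts G \<inter> ?A - ?K) = (verts G - ?K) \<inter> ((Ch - ?K) \<union> (Fh - ?K))"
    by blast
  then have "del_verts (induced G ?A) ?K = induced (del_verts G ?K) ((Ch - ?K) \<union> (Fh - ?K))"
    by (simp only: del_verts_def verts_induced induced_induced)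
  then have sub': "subgraph (del_verts H ?K) (induced (del_verts G ?K) ((Ch - ?K) \<union> (Fh - ?K)))"
    using subgraph_del_verts[OF sub, of ?K] by (simp only:)
  show "is_z_antler (del_verts G ?K) z (Ch - ?K) (Fh - ?K)"
    by (rule z_antlerI[OF mgraph_del_verts[OF G] fvc_del_verts[OF fvch]
          certificate_order_del_verts[OF H min' sub']])
qed

theorem lemma20:
  fixes G :: "'a mgraph" and C F :: "'a set"
  assumes "mgraph G" and "is_antler G C F"
  shows "(\<forall>S'. is_min_fvs (del_verts G (C \<union> F)) S' \<longrightarrow> is_min_fvs G (C \<union> S'))
       \<and> (\<forall>(z::nat) Ch Fh. is_z_antler G z Ch Fh \<longrightarrow>
            (\<exists>C' F'. is_z_antler (del_verts G (C \<union> F)) z C' F'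
               \<and> C' \<union> F' = (Ch \<union> Fh) \<inter> verts (del_verts G (C \<union> F))
               \<and> int (card C') = int (card Ch) - int (card ((Ch \<union> Fh) \<inter> C))))"
proof (intro conjI allI impI)
  fix S' assume "is_min_fvs (del_verts G (C \<union> F)) S'"
  then show "is_min_fvs G (C \<union> S')"
    by (rule min_fvs_Un_antler[OF assms])
next
  fix z Ch Fh assume za: "is_z_antler G z Ch Fh"
  let ?K = "C \<union> F"
  have "(Ch - ?K) \<union> (Fh - ?K) = (Ch \<union> Fh) \<inter> verts (del_verts G ?K)"
    using za by (auto simp: is_z_antler_def is_antler_def is_fvc_def del_verts_def)
  moreover have "int (card (Ch - ?K)) = int (card Ch) - int (card ((Ch \<union> Fh) \<inter> C))"
    using z_antler_del_antler(2)[OF assms za] by (simp add: Int_commute)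
  ultimately show "\<exists>C' F'. is_z_antler (del_verts G ?K) z C' F'
      \<and> C' \<union> F' = (Ch \<union> Fh) \<inter> verts (del_verts G ?K)
      \<and> int (card C') = int (card Ch) - int (card ((Ch \<union> Fh) \<inter> C))"
    using z_antler_del_antler(1)[OF assms za] by blast
qed

end
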